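(* Assume the law of excluded middle. If $\alpha\in\mathrm{ord}$ is bounded, i.e. $\alpha\le\underline m$ for some $m\in\mathbb N$, then $\alpha$ is finite, i.e. $\alpha=_{\mathrm{Ord}}\underline n$ for some $n\in\mathbb N$.
   Context: Let $\mathfrak F$ be a set of index sets such that: $\mathbb N$ and each $\mathbb N_k=\{n\in\mathbb N:n<k\}$ ($k\ge 0$) belong to $\mathfrak F$; every finitely enumerated subset of an element of $\mathfrak F$ is isomorphic to an element of $\mathfrak F$; for $J\in\mathfrak F$ the set of finitely enumerated subsets of $J$ is isomorphic to an element of $\mathfrak F$; $\mathfrak F$ is stable under disjoint unions indexed by elements of $\mathfrak F$. A finitely enumerated subset of $A$ is one given by a map $\mathbb N_k\to A$; write $F\subseteq_f I$. The set $\mathrm{ord}$ is inductively generated by $\underline 0$ and, for every family $(\alpha_i)_{i\in I}$ with $I\in\mathfrak F$, $\alpha_i\in\mathrm{ord}$, an element $\mathrm S(\alpha_i)_{i\in I}$; for such $\alpha$, $I_\alpha=I$ and $\alpha_i$ are its definitional subordinals; $I_{\underline 0}=\emptyset$. $\mathrm{succ}(\beta)$ is $\mathrm S$ of the one-element family $(\beta)$, and $\underline{m+1}=\mathrm{succ}(\underline m)$. For a finite list $F$ in $I_\alpha$, $\alpha_F$ is the list of the $\alpha_i$, $i\in F$. Relations between an element and a nonempty finite list, by simultaneous induction: $\alpha\le\beta^1,\dots,\beta^m$ means $\alpha_i<\beta^1,\dots,\beta^m$ for all $i\in I_\alpha$; $\alpha<\beta^1,\dots,\beta^m$ means there exist $F_1\subseteq_f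 I_{\beta^1},\dots,F_m\subseteq_f I_{\beta^m}$, not all empty, with $\alpha\le\beta^1_{F_1},\dots,\beta^m_{F_m}$ (concatenated list). $\alpha=_{\mathrm{Ord}}\beta$ means $\alpha\le\beta$ and $\beta\le\alpha$. *)

theory Defs
  imports Main "HOL-Library.Infinite_Typeclass"
begin

text \<open>Generalised ordinals: \<open>S I f\<close> is the supremum-successor of the family
  \<open>(f i)\<^sub>i\<^sub>\<in>\<^sub>I\<close>; index sets are subsets of the (infinite) index type \<open>'i\<close>.
  Values of \<open>f\<close> outside \<open>I\<close> are irrelevant.\<close>
datatype 'i ord = Zero | S "'i set" "'i \<Rightarrow> 'i ord"

primrec idx :: "'i ord \<Rightarrow> 'i set" where
  "idx Zero = {}"
| "idx (S I f) = I"

primrec sub :: "'i ord \<Rightarrow> 'i \<Rightarrow> 'i ord" where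
  "sub Zero i = Zero"
| "sub (S I f) i = f i"

definition sublist_of :: "'i ord list \<Rightarrow> 'i list list \<Rightarrow> 'i ord list" where
  "sublist_of bs Fs = concat (map (\<lambda>(b, F). map (sub b) F) (zip bs Fs))"

text \<open>Admissible choices \<open>F\<^sub>1 \<subseteq>\<^sub>f I\<^sub>\<beta>\<^sub>1, ..., F\<^sub>m \<subseteq>\<^sub>f I\<^sub>\<beta>\<^sub>m\<close>, not all empty
  (finitely enumerated subsets are lists).\<close>
definition admissible :: "'i ord list \<Rightarrow> 'i list list \<Rightarrow> bool" where
  "admissible bs Fs \<longleftrightarrow> length Fs = length bs \<and>
     (\<forall>j<length bs. set (Fs ! j) \<subseteq> idx (bs ! j)) \<and> (\<exists>j<length bs. Fs ! j \<noteq> [])"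

text \<open>\<open>\<alpha> \<le> \<beta>s\<close>, with \<open>\<alpha>\<^sub>i < \<beta>s\<close> unfolded inline.\<close>
primrec ord_le :: "'i ord \<Rightarrow> 'i ord list \<Rightarrow> bool" where
  "ord_le Zero bs = True"
| "ord_le (S I f) bs =
     (\<forall>i\<in>I. \<exists>Fs. admissible bs Fs \<and> ord_le (f i) (sublist_of bs Fs))"

definition ord_lt :: "'i ord \<Rightarrow> 'i ord list \<Rightarrow> bool" where
  "ord_lt a bs \<longleftrightarrow> (\<exists>Fs. admissible bs Fs \<and> ord_le a (sublist_of bs Fs))"

definition ord_eq :: "'i ord \<Rightarrow> 'i ord \<Rightarrow> bool" where
  "ord_eq a b \<longleftrightarrow> ord_le a [b] \<and> ord_le b [a]"

definition succ :: "'i ord \<Rightarrow> 'i ord" where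
  "succ b = S {undefined} (\<lambda>_. b)"

primrec nat_ord :: "nat \<Rightarrow> 'i ord" where
  "nat_ord 0 = Zero"
| "nat_ord (Suc m) = succ (nat_ord m)"

end

theory Submission
  imports Defs
begin

text \<open>Say that \<open>\<alpha>\<close> has height at most \<open>k\<close> if every chain \<open>\<alpha>, \<alpha>\<^sub>i, \<alpha>\<^sub>i\<^sub>j, ...\<close> of
  definitional subordinals starting at \<open>\<alpha>\<close> has at most \<open>k\<close> steps. The subordinals of a list of
  copies of \<open>nat_ord (Suc k)\<close> are again copies of \<open>nat_ord k\<close>, so \<open>\<alpha> \<le> nat_ord k\<close> holds exactly
  when \<open>\<alpha>\<close> has height at most \<open>k\<close>. A bounded \<open>\<alpha>\<close> therefore has a least height \<open>n\<close> (this is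
  where excluded middle enters) and \<open>\<alpha> \<le> nat_ord n\<close>. By minimality \<open>\<alpha>\<close> contains a chain of
  \<open>n\<close> steps, and following it one index at a time gives \<open>nat_ord n \<le> \<alpha>\<close>.\<close>

fun height_le :: "'i ord \<Rightarrow> nat \<Rightarrow> bool" where
  "height_le Zero k = True"
| "height_le (S I f) 0 = (I = {})"
| "height_le (S I f) (Suc k) = (\<forall>i\<in>I. height_le (f i) k)"

lemma set_sublist_of:
  "set (sublist_of bs Fs) = (\<Union>(b, F)\<in>set (zip bs Fs). sub b ` set F)"
  by (auto simp: sublist_of_def)

lemma sublist_of_singletons: "sublist_of bs (map (\<lambda>_. [i]) bs) = map (\<lambda>b. sub b i) bs"
  by (induction bs) (auto simp: sublist_of_def)

lemma admissible_nonempty_index: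
  assumes "admissible bs Fs"
  obtains b i where "b \<in> set bs" "i \<in> idx b" "sub b i \<in> set (sublist_of bs Fs)"
proof -
  from assms obtain j where j: "j < length bs" "Fs ! j \<noteq> []" "set (Fs ! j) \<subseteq> idx (bs ! j)"
    and len: "length Fs = length bs"
    by (auto simp: admissible_def)
  then obtain i where i: "i \<in> set (Fs ! j)"
    by (meson last_in_set)
  have "(bs ! j, Fs ! j) \<in> set (zip bs Fs)"
    using j len by (metis in_set_zip fst_conv snd_conv)
  then have "sub (bs ! j) i \<in> set (sublist_of bs Fs)"
    using i by (auto simp: set_sublist_of)
  then show ?thesis
    using that j i by (meson nth_mem subsetD)
qed

lemma ord_le_nat_ord_iff_height_le:
  fixes a :: "'i ord"
  shows "set bs = {nat_ord k} \<Longrightarrow> ord_le a bs \<longleftrightarrow> height_le a k"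
proof (induction a arbitrary: bs k)
  case Zero
  then show ?case by simp
next
  case (S I f)
  show ?case
  proof (cases k)
    case 0
    have "\<not> admissible bs Fs" for Fs
      using S.prems 0
      by (metis admissible_nonempty_index empty_iff idx.simps(1) nat_ord.simps(1) singletonD)
    then show ?thesis
      using 0 by auto
  next
    case (Suc k')
    have idx_bs: "idx b = {undefined}" and sub_bs: "sub b j = nat_ord k'" if "b \<in> set bs" for b j
      using that S.prems Suc by (auto simp: succ_def)
    have "(\<exists>Fs. admissible bs Fs \<and> ord_le (f i) (sublist_of bs Fs)) \<longleftrightarrow> height_le (f i) k'" for i
    proof
      assume "\<exists>Fs. admissible bs Fs \<and> ord_le (f i) (sublist_of bs Fs)"
      then obtain Fs where Fs: "admissible bs Fs" "ord_le (f i) (sublist_of bs Fs)"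
        by blast
      have "set (sublist_of bs Fs) = {nat_ord k'}"
        using admissible_nonempty_index[OF Fs(1)] sub_bs
        by (fastforce simp: set_sublist_of dest: set_zip_leftD)
      then show "height_le (f i) k'"
        using S.IH[OF rangeI] Fs(2) by blast
    next
      assume height: "height_le (f i) k'"
      let ?Fs = "map (\<lambda>_. [undefined]) bs"
      have "bs \<noteq> []"
        using S.prems by auto
      then have "admissible bs ?Fs"
        using idx_bs by (auto simp: admissible_def)
      moreover have "set (sublist_of bs ?Fs) = {nat_ord k'}"
        using sub_bs \<open>bs \<noteq> []\<close> by (simp add: sublist_of_singletons image_constant_conv)
      ultimately show "\<exists>Fs. admissible bs Fs \<and> ord_le (f i) (sublist_of bs Fs)"
        using S.IH[OF rangeI] height by metis
    qed
    then show ?thesis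
      using Suc by simp
  qed
qed

corollary ord_le_nat_ord_iff_height_le_single:
  "ord_le a [nat_ord k] \<longleftrightarrow> height_le a k"
  by (rule ord_le_nat_ord_iff_height_le) simp

lemma ord_le_succ_iff: "ord_le (succ b) bs \<longleftrightarrow> ord_lt b bs"
  by (simp add: succ_def ord_lt_def)

lemma nat_ord_Suc_le_if_not_height_le:
  "\<not> height_le a k \<Longrightarrow> ord_le (nat_ord (Suc k)) [a]"
proof (induction k arbitrary: a)
  case 0
  then obtain I f i where "a = S I f" "i \<in> I"
    by (cases a) auto
  then have "admissible [a] [[i]]"
    by (auto simp: admissible_def)
  then show ?case
    by (auto simp: ord_le_succ_iff ord_lt_def)
next
  case (Suc k)
  then obtain I f i where a: "a = S I f" "i \<in> I" "\<not> height_le (f i) k"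
    by (cases a) auto
  have "admissible [a] [[i]]"
    using a by (auto simp: admissible_def)
  moreover have "sublist_of [a] [[i]] = [f i]"
    using a by (simp add: sublist_of_def)
  ultimately show ?case
    unfolding nat_ord.simps(2)[of "Suc k"] ord_le_succ_iff ord_lt_def
    using Suc.IH[OF a(3)] by metis
qed

theorem corollary3p21:
  fixes \<alpha> :: "'i::infinite ord"
  assumes "\<exists>m. ord_le \<alpha> [nat_ord m]"
  shows "\<exists>n. ord_eq \<alpha> (nat_ord n)"
proof -
  define n where "n = (LEAST n. height_le \<alpha> n)"
  have "height_le \<alpha> n"
    using assms unfolding n_def ord_le_nat_ord_iff_height_le_single by (metis LeastI)
  moreover have "ord_le (nat_ord n) [\<alpha>]"
  proof (cases n)
    case 0
    then show ?thesis by simp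
  next
    case (Suc k)
    then have "\<not> height_le \<alpha> k"
      unfolding n_def by (metis Least_le lessI not_less)
    then show ?thesis
      using Suc nat_ord_Suc_le_if_not_height_le by blast
  qed
  ultimately show ?thesis
    by (auto simp: ord_eq_def ord_le_nat_ord_iff_height_le_single)
qed

end
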